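(* If $s>0$ is small enough, there exist real numbers $X_n,Y_n,Z_n,W_n$ (depending on $s$) such that $Q_n(1)=1$, $Q_n'(1)=1$, $Q_n(s^\nu)=s^\nu$ and $Q_n'(s^\nu)=1$, and these can be chosen so that $\lim_{s\to0^+}\frac{X_n-1}{s^\nu}=\frac{d_1(d_1-3)(d_n-1)}{(d_1-1)^2d_n}$, $\lim_{s\to0^+}\frac{Y_n}{s^\nu}=\frac{2d_1(d_n-1)}{(d_1-1)d_n}$, $\lim_{s\to0^+}\frac{Z_n-1}{s^\nu}=0$, $\lim_{s\to0^+}\frac{W_n}{s^\nu}=\frac{d_n-1}{d_n}$.
   Context: $n\ge3$ odd, $d_1,\dots,d_n$ positive integers with $\sum1/d_i<1$, $d_{\max}=\max_id_i$, $D_i=d_i+d_{i+1}$, $\tau=\bigl(d_1d_nd_{\max}^{2(d_1-d_n)/d_1}\bigr)^{1/\sum_{i=1}^{n-1}(d_n/d_i)}$, $\nu=\frac{d_n}{d_n-1}\sum_{i=1}^{n-1}\frac1{d_i}$, $b_1=(d_{\max}^2\tau s)^{1/d_1}$, $b_i=(\tau s)^{1/d_i}b_{i-1}$ ($2\le i\le n-1$), and $Q_n(z)=\frac{d_1z^{d_n}}{(d_1-1)X_nz^{d_1}+Y_nz+Z_n}\prod_{i=1}^{n-1}(z^{D_i}-b_i^{D_i})^{(-1)^{i-1}}+W_n$. *)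

theory Defs
  imports "HOL-Analysis.Analysis"
begin

text \<open>Indices run over 1..n; d :: nat => nat gives d_1,...,d_n.\<close>

definition dmax :: "(nat \<Rightarrow> nat) \<Rightarrow> nat \<Rightarrow> nat" where
  "dmax d n = Max (d ` {1..n})"

definition tau :: "(nat \<Rightarrow> nat) \<Rightarrow> nat \<Rightarrow> real" where
  "tau d n = (real (d 1) * real (d n) *
      real (dmax d n) powr (2 * (real (d 1) - real (d n)) / real (d 1)))
      powr (1 / (\<Sum>i=1..n-1. real (d n) / real (d i)))"

definition nu :: "(nat \<Rightarrow> nat) \<Rightarrow> nat \<Rightarrow> real" where
  "nu d n = real (d n) / (real (d n) - 1) * (\<Sum>i=1..n-1. 1 / real (d i))"

text \<open>bval d n s i = b_i (for 1 <= i <= n-1); the value at 0 is unused.\<close>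
fun bval :: "(nat \<Rightarrow> nat) \<Rightarrow> nat \<Rightarrow> real \<Rightarrow> nat \<Rightarrow> real" where
  "bval d n s 0 = 0"
| "bval d n s (Suc 0) = (real (dmax d n) ^ 2 * tau d n * s) powr (1 / real (d 1))"
| "bval d n s (Suc (Suc k)) =
     (tau d n * s) powr (1 / real (d (Suc (Suc k)))) * bval d n s (Suc k)"

definition Qn :: "(nat \<Rightarrow> nat) \<Rightarrow> nat \<Rightarrow> real \<Rightarrow> real \<Rightarrow> real \<Rightarrow> real \<Rightarrow> real \<Rightarrow> real \<Rightarrow> real" where
  "Qn d n s X Y Z W z =
     real (d 1) * z ^ d n / ((real (d 1) - 1) * X * z ^ d 1 + Y * z + Z)
     * (\<Prod>i=1..n-1. (z ^ (d i + d (Suc i)) - bval d n s i ^ (d i + d (Suc i)))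
                        powi ((-1) ^ (i - 1)))
     + W"

end

theory Submission
  imports Defs
begin

text \<open>
  Put \<open>t = s^\<nu>\<close> and write \<open>Q\<^sub>n = N / D + W\<close> with \<open>N(z) = d\<^sub>1 z^d\<^sub>n P(z)\<close>
  and \<open>D(z) = (d\<^sub>1 - 1) X z^d\<^sub>1 + Y z + Z\<close>. The exponents are such that both
  \<open>b\<^sub>i^D\<^sub>i\<close> and \<open>(t / b\<^sub>i)^D\<^sub>i\<close> are \<open>o(t)\<close>. Hence \<open>P(1) = 1 + o(t)\<close>,
  \<open>P'(1) / P(1) = d\<^sub>1 - d\<^sub>n + o(t)\<close> (the alternating sum of the \<open>D\<^sub>i\<close> telescopes
  because \<open>n\<close> is odd) and \<open>t P'(t) / P(t) = o(t)\<close>, while the choice of \<open>\<tau>\<close> makes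
  \<open>d\<^sub>1 d\<^sub>n t^(d\<^sub>n - 1) P(t) = 1 + o(t)\<close>.

  With these asymptotics, parametrise \<open>W\<close> by one real number \<open>q\<close>: the four conditions
  then determine \<open>D(1), D'(1), D(t), D'(t)\<close>, three of them fix \<open>X, Y, Z\<close> linearly, and the
  fourth becomes a scalar equation in \<open>q\<close> whose left-hand side, divided by \<open>t\<close>, tends to a
  strictly decreasing affine function of \<open>q\<close>. The intermediate value theorem gives a root
  converging to the zero \<open>q\<^sup>*\<close> of that function, and the limits of \<open>X, Y, Z, W\<close> follow.
\<close>

lemma tendsto_0_of_ratio:
  fixes t f :: "'a \<Rightarrow> real"
  assumes "(t \<longlongrightarrow> 0) F" and "eventually (\<lambda>s. t s \<noteq> 0) F"
    and "((\<lambda>s. f s / t s) \<longlongrightarrow> L) F"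
  shows "(f \<longlongrightarrow> 0) F"
proof -
  have "((\<lambda>s. t s * (f s / t s)) \<longlongrightarrow> 0 * L) F"
    using assms(1,3) by (rule tendsto_mult)
  moreover have "eventually (\<lambda>s. t s * (f s / t s) = f s) F"
    using assms(2) by eventually_elim simp
  ultimately show ?thesis by (simp add: Lim_transform_eventually)
qed

lemma Lim_transform_eventually_eq:
  "(f \<longlongrightarrow> a) F \<Longrightarrow> eventually (\<lambda>s. f s = g s) F \<Longrightarrow> a = b \<Longrightarrow> (g \<longlongrightarrow> b) F"
  using Lim_transform_eventually[of f a F g] by simp

lemma DERIV_divide_plus_const:
  assumes "(f has_real_derivative f') (at z)" "(g has_real_derivative g') (at z)" "g z \<noteq> 0"
  shows "((\<lambda>z. f z / g z + c) has_real_derivative (f' * g z - f z * g') / (g z)^2) (at z)"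
  using DERIV_add[OF DERIV_divide[OF assms] DERIV_const[of c]] assms(3)
  by (simp add: power2_eq_square)

lemma minus_power_int_unit: "k = 1 \<or> k = -1 \<Longrightarrow> (- y :: real) powi k = - (y powi k)"
  by (auto simp: power_int_minus)

lemma has_real_derivative_prod_power_int:
  fixes f :: "'a \<Rightarrow> real \<Rightarrow> real" and g :: "'a \<Rightarrow> real"
  assumes "finite I" "\<forall>i\<in>I. (f i has_real_derivative g i) (at z)" "\<forall>i\<in>I. f i z \<noteq> 0"
  shows "((\<lambda>z. \<Prod>i\<in>I. f i z powi k i) has_real_derivative
           (\<Prod>i\<in>I. f i z powi k i) * (\<Sum>i\<in>I. of_int (k i) * g i / f i z)) (at z)"
  using assms
proof (induction I rule: finite_induct)
  case (insert a I)
  have fa: "f a z \<noteq> 0" using insert by auto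
  have "((\<lambda>z. f a z powi k a) has_real_derivative of_int (k a) * f a z powi (k a - 1) * g a) (at z)"
    using insert by (auto intro!: DERIV_power_int)
  moreover have "((\<lambda>z. \<Prod>i\<in>I. f i z powi k i) has_real_derivative
      (\<Prod>i\<in>I. f i z powi k i) * (\<Sum>i\<in>I. of_int (k i) * g i / f i z)) (at z)"
    using insert by auto
  moreover have "f a z powi (k a - 1) = f a z powi k a / f a z"
    using fa by (simp add: power_int_diff)
  ultimately show ?case
    using DERIV_mult insert.hyps fa by (fastforce simp: field_simps)
qed simp

lemma tendsto_prod_minus_1_over:
  fixes f :: "'a \<Rightarrow> 'b \<Rightarrow> real"
  assumes "finite I" "(t \<longlongrightarrow> 0) F" "eventually (\<lambda>s. t s \<noteq> 0) F"
    "\<forall>i\<in>I. ((\<lambda>s. (f i s - 1) / t s) \<longlongrightarrow> 0) F"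
  shows "((\<lambda>s. ((\<Prod>i\<in>I. f i s) - 1) / t s) \<longlongrightarrow> 0) F"
  using assms
proof (induction I rule: finite_induct)
  case (insert a I)
  have IH: "((\<lambda>s. ((\<Prod>i\<in>I. f i s) - 1) / t s) \<longlongrightarrow> 0) F" using insert by auto
  have fa: "((\<lambda>s. (f a s - 1) / t s) \<longlongrightarrow> 0) F" using insert by auto
  have "((\<lambda>s. \<Prod>i\<in>I. f i s) \<longlongrightarrow> 1) F"
    by (rule LIM_zero_cancel) (rule tendsto_0_of_ratio[OF insert.prems(1,2) IH])
  then have "((\<lambda>s. (f a s - 1) / t s * (\<Prod>i\<in>I. f i s) + ((\<Prod>i\<in>I. f i s) - 1) / t s)
      \<longlongrightarrow> 0 * 1 + 0) F"
    by (intro tendsto_intros fa IH)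
  moreover have "(f a s - 1) / t s * (\<Prod>i\<in>I. f i s) + ((\<Prod>i\<in>I. f i s) - 1) / t s
      = ((\<Prod>i\<in>insert a I. f i s) - 1) / t s" for s
    using insert.hyps by (simp add: add_divide_distrib[symmetric] algebra_simps)
  ultimately show ?case by simp
qed simp

lemma tendsto_0_at_right_if_eq_exp_ln:
  assumes "k > 0" and "\<And>s. 0 < s \<Longrightarrow> s < 1 \<Longrightarrow> f s = exp (C + k * ln s)"
  shows "(f \<longlongrightarrow> 0) (at_right (0::real))"
proof (rule Lim_transform_eventually)
  have "filterlim (\<lambda>s. k * ln s) at_bot (at_right (0::real))"
    by (rule filterlim_tendsto_pos_mult_at_bot[OF tendsto_const assms(1) ln_at_0])
  then have "filterlim (\<lambda>s. C + k * ln s) at_bot (at_right (0::real))"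
    using filterlim_tendsto_add_at_bot_iff[OF tendsto_const[of C], of "\<lambda>s. k * ln s" "at_right 0"]
    by simp
  from filterlim_compose[OF exp_at_bot this]
  show "((\<lambda>s. exp (C + k * ln s)) \<longlongrightarrow> 0) (at_right 0)" by simp
  show "eventually (\<lambda>s. exp (C + k * ln s) = f s) (at_right 0)"
    unfolding eventually_at_right_field using assms(2) by (intro exI[of _ 1]) auto
qed

lemma tendsto_power_int_minus_1_over:
  fixes r t :: "'a \<Rightarrow> real"
  assumes "(t \<longlongrightarrow> 0) F" "eventually (\<lambda>s. t s \<noteq> 0) F" "((\<lambda>s. r s / t s) \<longlongrightarrow> 0) F"
    and "k = 1 \<or> k = -1"
  shows "((\<lambda>s. ((1 - r s) powi k - 1) / t s) \<longlongrightarrow> 0) F"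
  using assms(4)
proof
  assume "k = 1"
  then show ?thesis using tendsto_minus[OF assms(3)] by (simp add: field_simps)
next
  assume k: "k = -1"
  have r: "(r \<longlongrightarrow> 0) F" using tendsto_0_of_ratio[OF assms(1-3)] .
  show ?thesis
  proof (rule Lim_transform_eventually_eq)
    show "((\<lambda>s. (r s / t s) / (1 - r s)) \<longlongrightarrow> 0 / (1 - 0)) F"
      by (intro tendsto_divide tendsto_diff tendsto_const assms(3) r) simp
    show "eventually (\<lambda>s. (r s / t s) / (1 - r s) = ((1 - r s) powi k - 1) / t s) F"
      using assms(2) order_tendstoD(2)[OF r zero_less_one]
      by eventually_elim (simp add: k power_int_minus field_simps)
  qed simp
qed

text \<open>
  The numerator \<open>N\<close> of \<open>Q = N / D + W\<close> enters only through \<open>N(1) = d1 \<alpha>\<close>,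
  \<open>N'(1) = d1 \<alpha> (dn + \<beta>)\<close>, \<open>N(t) = \<gamma> t / dn\<close> and \<open>N'(t) = \<gamma> (dn + \<delta>) / dn\<close>.
\<close>
locale interpolation =
  fixes d1 dn :: nat and F :: "real filter" and t \<alpha> \<beta> \<gamma> \<delta> :: "real \<Rightarrow> real"
  assumes d1_ge_2: "d1 \<ge> 2" and dn_ge_2: "dn \<ge> 2"
    and t_tendsto_0: "(t \<longlongrightarrow> 0) F" and eventually_t_pos: "eventually (\<lambda>s. t s > 0) F"
    and \<alpha>_asymp: "((\<lambda>s. (\<alpha> s - 1) / t s) \<longlongrightarrow> 0) F"
    and \<beta>_asymp: "((\<lambda>s. (\<beta> s - (real d1 - real dn)) / t s) \<longlongrightarrow> 0) F"
    and \<gamma>_asymp: "((\<lambda>s. (\<gamma> s - 1) / t s) \<longlongrightarrow> 0) F"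
    and \<delta>_asymp: "((\<lambda>s. \<delta> s / t s) \<longlongrightarrow> 0) F"
begin

definition "c1 = real d1"
definition "cn = real dn"
definition "wlim = 1 - 1 / cn"
definition "e s = t s ^ (d1 - 1)"
text \<open>The limit of \<open>e s / t s\<close>: it is \<open>1\<close> if \<open>d1 = 2\<close> and \<open>0\<close> otherwise.\<close>
definition "e0 = (0::real) ^ (d1 - 2)"

definition "N1 s = c1 * \<alpha> s"
definition "N1' s = c1 * \<alpha> s * (cn + \<beta> s)"
definition "Nt s = \<gamma> s * t s / cn"
definition "Nt' s = \<gamma> s * (cn + \<delta> s) / cn"

text \<open>
  For \<open>W = Wq s q\<close> the conditions \<open>Q(1) = 1\<close>, \<open>Q'(1) = 1\<close>, \<open>Q(t) = t\<close>, \<open>Q'(t) = 1\<close>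
  prescribe \<open>D(1), D'(1), D(t), D'(t)\<close> as \<open>D1, D1', Dt, Dt'\<close>. The coefficients of
  \<open>D(z) = A z^d1 + Y z + Z\<close>, where \<open>A = (d1 - 1) X\<close>, are solved from \<open>D(1)\<close>, \<open>D'(1)\<close>,
  \<open>D'(t)\<close>; what is left of \<open>D(t) = Dt\<close> is the equation \<open>residual s q = 0\<close>. The
  scaling \<open>t - W = t (1 + t\<^sup>2 q) / (dn + \<delta>)\<close> is what makes \<open>residual s q / t\<close> converge
  to an affine function of \<open>q\<close>.
\<close>
definition "t_minus_W s q = t s * (1 + t s ^ 2 * q) / (cn + \<delta> s)"
definition "Wq s q = t s - t_minus_W s q"
definition "one_minus_W s q = 1 - Wq s q"
definition "D1 s q = N1 s / one_minus_W s q"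
definition "D1' s q = (N1' s - D1 s q) / one_minus_W s q"
definition "Dt s q = Nt s / t_minus_W s q"
definition "Dt' s q = (Nt' s - Dt s q) / t_minus_W s q"
definition "Aq s q = (D1' s q - Dt' s q) / (c1 * (1 - e s))"
definition "Yq s q = D1' s q - c1 * Aq s q"
definition "Zq s q = D1 s q - Aq s q - Yq s q"
definition "residual s q = Aq s q * t s ^ d1 + Yq s q * t s + Zq s q - Dt s q"

lemma c1_ge_2: "c1 \<ge> 2" using d1_ge_2 unfolding c1_def by simp
lemma cn_ge_2: "cn \<ge> 2" using dn_ge_2 unfolding cn_def by simp

lemma eventually_t_ne_0: "eventually (\<lambda>s. t s \<noteq> 0) F"
  using eventually_t_pos by eventually_elim simp

lemma tendsto_0_of_ratio_t: "((\<lambda>s. f s / t s) \<longlongrightarrow> L) F \<Longrightarrow> (f \<longlongrightarrow> 0) F"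
  using tendsto_0_of_ratio[OF t_tendsto_0 eventually_t_ne_0] .

lemma basic_limits:
  shows "(\<alpha> \<longlongrightarrow> 1) F" "(\<beta> \<longlongrightarrow> c1 - cn) F" "(\<gamma> \<longlongrightarrow> 1) F" "(\<delta> \<longlongrightarrow> 0) F"
    "(e \<longlongrightarrow> 0) F" "((\<lambda>s. e s / t s) \<longlongrightarrow> e0) F"
proof -
  show "(\<alpha> \<longlongrightarrow> 1) F"
    by (rule LIM_zero_cancel) (rule tendsto_0_of_ratio_t[OF \<alpha>_asymp])
  show "(\<beta> \<longlongrightarrow> c1 - cn) F" unfolding c1_def cn_def
    by (rule LIM_zero_cancel) (rule tendsto_0_of_ratio_t[OF \<beta>_asymp])
  show "(\<gamma> \<longlongrightarrow> 1) F"
    by (rule LIM_zero_cancel) (rule tendsto_0_of_ratio_t[OF \<gamma>_asymp])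
  show "(\<delta> \<longlongrightarrow> 0) F" using tendsto_0_of_ratio_t[OF \<delta>_asymp] .
  have "((\<lambda>s. t s ^ (d1 - 1)) \<longlongrightarrow> 0 ^ (d1 - 1)) F" by (intro tendsto_power t_tendsto_0)
  moreover have "(0::real) ^ (d1 - 1) = 0" using d1_ge_2 by simp
  ultimately show "(e \<longlongrightarrow> 0) F" unfolding e_def[abs_def] by metis
  have "((\<lambda>s. t s ^ (d1 - 2)) \<longlongrightarrow> e0) F" unfolding e0_def by (intro tendsto_power t_tendsto_0)
  moreover have "eventually (\<lambda>s. t s ^ (d1 - 2) = e s / t s) F"
    using eventually_t_ne_0
  proof eventually_elim
    case (elim s)
    have "d1 - 1 = Suc (d1 - 2)" using d1_ge_2 by simp
    then show ?case unfolding e_def using elim by simp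
  qed
  ultimately show "((\<lambda>s. e s / t s) \<longlongrightarrow> e0) F" by (rule Lim_transform_eventually)
qed

lemma eventually_cn_plus_\<delta>_gt_1: "eventually (\<lambda>s. cn + \<delta> s > 1) F"
  using order_tendstoD(1)[OF tendsto_add[OF tendsto_const[of cn] basic_limits(4)], of 1] cn_ge_2
  by simp

lemma eventually_e_lt_1: "eventually (\<lambda>s. e s < 1) F"
  using order_tendstoD(2)[OF basic_limits(5), of 1] by simp

lemma Dt_eq:
  assumes "t s \<noteq> 0" "cn + \<delta> s \<noteq> 0" "1 + t s ^ 2 * q \<noteq> 0"
  shows "Dt s q = \<gamma> s * (cn + \<delta> s) / (cn * (1 + t s ^ 2 * q))"
proof -
  define u where "u = 1 + t s ^ 2 * q"
  then have "u \<noteq> 0" using assms(3) by simp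
  then show ?thesis unfolding Dt_def Nt_def t_minus_W_def u_def[symmetric]
    using assms(1,2) cn_ge_2 by (simp add: field_simps)
qed

definition "A_lim q0 = (c1 * (c1 - 2) * wlim - cn * q0 + c1 * (c1 - 1) * e0) / c1"
definition "Y_lim q0 = c1 * (c1 - 2) * wlim - c1 * A_lim q0"
definition "Z_lim q0 = c1 * wlim - A_lim q0 - Y_lim q0"

context
  fixes q :: "real \<Rightarrow> real" and q0 :: real
  assumes q_tendsto: "(q \<longlongrightarrow> q0) F"
begin

lemma tendsto_t_minus_W_factor: "((\<lambda>s. 1 + t s ^ 2 * q s) \<longlongrightarrow> 1) F"
  using tendsto_add[OF tendsto_const[of 1]
      tendsto_mult[OF tendsto_power[OF t_tendsto_0, of 2] q_tendsto]] by simp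

lemma eventually_t_minus_W_factor_pos: "eventually (\<lambda>s. 1 + t s ^ 2 * q s > 0) F"
  using order_tendstoD(1)[OF tendsto_t_minus_W_factor] by simp

lemma tendsto_Wq: "((\<lambda>s. Wq s (q s) / t s) \<longlongrightarrow> wlim) F"
proof (rule Lim_transform_eventually_eq)
  show "((\<lambda>s. 1 - (1 + t s ^ 2 * q s) / (cn + \<delta> s)) \<longlongrightarrow> 1 - 1 / (cn + 0)) F"
    using cn_ge_2
    by (intro tendsto_diff tendsto_const tendsto_divide tendsto_t_minus_W_factor
        tendsto_add basic_limits(4)) auto
  show "\<forall>\<^sub>F s in F. 1 - (1 + t s ^ 2 * q s) / (cn + \<delta> s) = Wq s (q s) / t s"
    using eventually_t_ne_0 eventually_cn_plus_\<delta>_gt_1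
  proof eventually_elim
    case (elim s)
    have "Wq s (q s) = t s * (1 - (1 + t s ^ 2 * q s) / (cn + \<delta> s))"
      unfolding Wq_def t_minus_W_def by (simp add: algebra_simps)
    with elim show ?case by simp
  qed
qed (simp add: wlim_def)

lemma tendsto_one_minus_W: "((\<lambda>s. one_minus_W s (q s)) \<longlongrightarrow> 1) F"
  using tendsto_diff[OF tendsto_const[of 1] tendsto_0_of_ratio_t[OF tendsto_Wq]]
  unfolding one_minus_W_def by simp

lemma eventually_one_minus_W_pos: "eventually (\<lambda>s. one_minus_W s (q s) > 0) F"
  using order_tendstoD(1)[OF tendsto_one_minus_W, of 0] by simp

lemma tendsto_D1: "((\<lambda>s. (D1 s (q s) - c1) / t s) \<longlongrightarrow> c1 * wlim) F"
proof (rule Lim_transform_eventually_eq)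
  show "((\<lambda>s. c1 * ((\<alpha> s - 1) / t s + Wq s (q s) / t s) / one_minus_W s (q s))
      \<longlongrightarrow> c1 * (0 + wlim) / 1) F"
    by (intro tendsto_mult tendsto_divide tendsto_add tendsto_const \<alpha>_asymp tendsto_Wq
        tendsto_one_minus_W) simp
  show "\<forall>\<^sub>F s in F. c1 * ((\<alpha> s - 1) / t s + Wq s (q s) / t s) / one_minus_W s (q s)
      = (D1 s (q s) - c1) / t s"
    using eventually_t_ne_0 eventually_one_minus_W_pos
    by eventually_elim (simp add: D1_def N1_def one_minus_W_def field_simps)
qed simp

lemma tendsto_D1': "((\<lambda>s. (D1' s (q s) - c1 * (c1 - 1)) / t s) \<longlongrightarrow> c1 * (c1 - 2) * wlim) F"
proof (rule Lim_transform_eventually_eq)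
  show "((\<lambda>s. (c1 * (((\<alpha> s - 1) / t s) * (cn + \<beta> s) + (\<beta> s - (real d1 - real dn)) / t s)
        - (D1 s (q s) - c1) / t s + c1 * (c1 - 1) * (Wq s (q s) / t s)) / one_minus_W s (q s))
      \<longlongrightarrow> (c1 * (0 * (cn + (c1 - cn)) + 0) - c1 * wlim + c1 * (c1 - 1) * wlim) / 1) F"
    by (intro tendsto_mult tendsto_divide tendsto_add tendsto_diff tendsto_const \<alpha>_asymp \<beta>_asymp
        tendsto_Wq tendsto_D1 tendsto_one_minus_W basic_limits(2)) simp
  show "\<forall>\<^sub>F s in F. (c1 * (((\<alpha> s - 1) / t s) * (cn + \<beta> s) + (\<beta> s - (real d1 - real dn)) / t s)
        - (D1 s (q s) - c1) / t s + c1 * (c1 - 1) * (Wq s (q s) / t s)) / one_minus_W s (q s)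
      = (D1' s (q s) - c1 * (c1 - 1)) / t s"
    using eventually_t_ne_0 eventually_one_minus_W_pos
    by eventually_elim
      (simp add: D1'_def N1'_def one_minus_W_def c1_def cn_def field_simps)
qed (simp add: algebra_simps)

lemma tendsto_Dt: "((\<lambda>s. (Dt s (q s) - 1) / t s) \<longlongrightarrow> 0) F"
proof (rule Lim_transform_eventually_eq)
  show "((\<lambda>s. (((\<gamma> s - 1) / t s) * (cn + \<delta> s) + \<delta> s / t s - cn * t s * q s)
        / (cn * (1 + t s ^ 2 * q s))) \<longlongrightarrow> (0 * (cn + 0) + 0 - cn * 0 * q0) / (cn * 1)) F"
    using cn_ge_2
    by (intro tendsto_mult tendsto_divide tendsto_add tendsto_diff tendsto_const \<gamma>_asymp \<delta>_asymp
        basic_limits(4) t_tendsto_0 q_tendsto tendsto_t_minus_W_factor) auto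
  show "\<forall>\<^sub>F s in F. (((\<gamma> s - 1) / t s) * (cn + \<delta> s) + \<delta> s / t s - cn * t s * q s)
        / (cn * (1 + t s ^ 2 * q s)) = (Dt s (q s) - 1) / t s"
    using eventually_t_ne_0 eventually_cn_plus_\<delta>_gt_1 eventually_t_minus_W_factor_pos
  proof eventually_elim
    case (elim s)
    define u where "u = 1 + t s ^ 2 * q s"
    have u: "u \<noteq> 0" using elim(3) by (simp add: u_def)
    have "((\<gamma> s - 1) / t s) * (cn + \<delta> s) + \<delta> s / t s - cn * t s * q s
        = (\<gamma> s * (cn + \<delta> s) - cn * u) / t s"
      using elim(1) by (simp add: u_def field_simps power2_eq_square)
    then have "(((\<gamma> s - 1) / t s) * (cn + \<delta> s) + \<delta> s / t s - cn * t s * q s) / (cn * u)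
        = (\<gamma> s * (cn + \<delta> s) / (cn * u) - 1) / t s"
      using u cn_ge_2 by (simp add: field_simps)
    also have "\<gamma> s * (cn + \<delta> s) / (cn * u) = Dt s (q s)"
      unfolding u_def using elim by (intro Dt_eq[symmetric]) auto
    finally show ?case unfolding u_def .
  qed
qed simp

lemma tendsto_Dt': "((\<lambda>s. Dt' s (q s) / t s) \<longlongrightarrow> cn * q0) F"
proof (rule Lim_transform_eventually_eq)
  show "((\<lambda>s. \<gamma> s * (cn + \<delta> s)^2 * q s / (cn * (1 + t s ^ 2 * q s)^2))
      \<longlongrightarrow> 1 * (cn + 0)^2 * q0 / (cn * 1^2)) F"
    using cn_ge_2
    by (intro tendsto_mult tendsto_divide tendsto_add tendsto_power tendsto_const basic_limits(3)
        basic_limits(4) q_tendsto tendsto_t_minus_W_factor) auto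
  show "\<forall>\<^sub>F s in F. \<gamma> s * (cn + \<delta> s)^2 * q s / (cn * (1 + t s ^ 2 * q s)^2) = Dt' s (q s) / t s"
    using eventually_t_ne_0 eventually_cn_plus_\<delta>_gt_1 eventually_t_minus_W_factor_pos
  proof eventually_elim
    case (elim s)
    define u where "u = 1 + t s ^ 2 * q s"
    have u: "u \<noteq> 0" using elim(3) by (simp add: u_def)
    have "Dt s (q s) = \<gamma> s * (cn + \<delta> s) / (cn * u)"
      unfolding u_def using elim by (intro Dt_eq) auto
    then have "Dt' s (q s) = (\<gamma> s * (cn + \<delta> s) / cn - \<gamma> s * (cn + \<delta> s) / (cn * u))
        / (t s * u / (cn + \<delta> s))"
      unfolding Dt'_def Nt'_def t_minus_W_def u_def by simp
    also have "\<dots> = \<gamma> s * (cn + \<delta> s)^2 * (u - 1) / (cn * u^2 * t s)"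
      using u elim(1,2) cn_ge_2 by (simp add: field_simps power2_eq_square)
    also have "u - 1 = t s * (t s * q s)" unfolding u_def by (simp add: power2_eq_square)
    finally show ?case unfolding u_def using elim(1) by (simp add: field_simps)
  qed
  show "1 * (cn + 0)^2 * q0 / (cn * 1^2) = cn * q0"
    using cn_ge_2 by (simp add: power2_eq_square)
qed


lemma tendsto_Aq: "((\<lambda>s. (Aq s (q s) - (c1 - 1)) / t s) \<longlongrightarrow> A_lim q0) F"
proof (rule Lim_transform_eventually_eq)
  show "((\<lambda>s. ((D1' s (q s) - c1 * (c1 - 1)) / t s - Dt' s (q s) / t s
        + c1 * (c1 - 1) * (e s / t s)) / (c1 * (1 - e s)))
      \<longlongrightarrow> (c1 * (c1 - 2) * wlim - cn * q0 + c1 * (c1 - 1) * e0) / (c1 * (1 - 0))) F"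
    using c1_ge_2
    by (intro tendsto_mult tendsto_divide tendsto_add tendsto_diff tendsto_const
        tendsto_D1' tendsto_Dt' basic_limits(5,6)) auto
  show "\<forall>\<^sub>F s in F. ((D1' s (q s) - c1 * (c1 - 1)) / t s - Dt' s (q s) / t s
        + c1 * (c1 - 1) * (e s / t s)) / (c1 * (1 - e s)) = (Aq s (q s) - (c1 - 1)) / t s"
    using eventually_t_ne_0 eventually_e_lt_1
  proof eventually_elim
    case (elim s)
    then show ?case using c1_ge_2 by (simp add: Aq_def field_simps)
  qed
qed (simp add: A_lim_def)

lemma tendsto_Yq: "((\<lambda>s. Yq s (q s) / t s) \<longlongrightarrow> Y_lim q0) F"
proof (rule Lim_transform_eventually_eq)
  show "((\<lambda>s. (D1' s (q s) - c1 * (c1 - 1)) / t s - c1 * ((Aq s (q s) - (c1 - 1)) / t s))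
      \<longlongrightarrow> c1 * (c1 - 2) * wlim - c1 * A_lim q0) F"
    by (intro tendsto_diff tendsto_mult tendsto_const tendsto_D1' tendsto_Aq)
  show "\<forall>\<^sub>F s in F. (D1' s (q s) - c1 * (c1 - 1)) / t s - c1 * ((Aq s (q s) - (c1 - 1)) / t s)
      = Yq s (q s) / t s"
    using eventually_t_ne_0 by eventually_elim (simp add: Yq_def field_simps)
qed (simp add: Y_lim_def)

lemma tendsto_Zq: "((\<lambda>s. (Zq s (q s) - 1) / t s) \<longlongrightarrow> Z_lim q0) F"
proof (rule Lim_transform_eventually_eq)
  show "((\<lambda>s. (D1 s (q s) - c1) / t s - (Aq s (q s) - (c1 - 1)) / t s - Yq s (q s) / t s)
      \<longlongrightarrow> c1 * wlim - A_lim q0 - Y_lim q0) F"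
    by (intro tendsto_diff tendsto_D1 tendsto_Aq tendsto_Yq)
  show "\<forall>\<^sub>F s in F. (D1 s (q s) - c1) / t s - (Aq s (q s) - (c1 - 1)) / t s - Yq s (q s) / t s
      = (Zq s (q s) - 1) / t s"
    using eventually_t_ne_0 by eventually_elim (simp add: Zq_def field_simps)
qed (simp add: Z_lim_def)

lemma tendsto_residual: "((\<lambda>s. residual s (q s) / t s) \<longlongrightarrow> Z_lim q0) F"
proof (rule Lim_transform_eventually_eq)
  show "((\<lambda>s. Aq s (q s) * e s + Yq s (q s) + (Zq s (q s) - 1) / t s - (Dt s (q s) - 1) / t s)
      \<longlongrightarrow> (c1 - 1) * 0 + 0 + Z_lim q0 - 0) F"
    by (intro tendsto_add tendsto_diff tendsto_mult basic_limits(5) tendsto_Zq tendsto_Dt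
        LIM_zero_cancel[OF tendsto_0_of_ratio_t[OF tendsto_Aq]]
        tendsto_0_of_ratio_t[OF tendsto_Yq])
  show "\<forall>\<^sub>F s in F. Aq s (q s) * e s + Yq s (q s) + (Zq s (q s) - 1) / t s - (Dt s (q s) - 1) / t s
      = residual s (q s) / t s"
    using eventually_t_ne_0
  proof eventually_elim
    case (elim s)
    have "d1 = Suc (d1 - 1)" using d1_ge_2 by simp
    then have "t s ^ d1 = t s * e s" unfolding e_def by (metis power_Suc)
    then show ?case unfolding residual_def using elim by (simp add: field_simps)
  qed
qed simp

end

definition "q_star = c1 * (2 * wlim + (c1 - 1)^2 * e0) / ((c1 - 1) * cn)"

lemma Z_lim_eq: "Z_lim q = (c1 - 1) * cn / c1 * (q_star - q)"
  using c1_ge_2 cn_ge_2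
  by (simp add: Z_lim_def Y_lim_def A_lim_def q_star_def field_simps power2_eq_square)

lemma wlim_eq: "wlim = (cn - 1) / cn"
  using cn_ge_2 by (simp add: wlim_def field_simps)

lemma A_lim_q_star: "A_lim q_star = c1 * (c1 - 3) * wlim / (c1 - 1)"
proof -
  have "cn * q_star = c1 * (2 * wlim + (c1 - 1)^2 * e0) / (c1 - 1)"
    using c1_ge_2 cn_ge_2 by (simp add: q_star_def)
  then show ?thesis using c1_ge_2 by (simp add: A_lim_def field_simps power2_eq_square)
qed

lemma Y_lim_q_star: "Y_lim q_star = 2 * c1 * wlim / (c1 - 1)"
  using c1_ge_2 by (simp add: Y_lim_def A_lim_q_star field_simps)

definition "admissible s \<longleftrightarrow> 0 < t s \<and> t s < 1 \<and> t s ^ 2 * (\<bar>q_star\<bar> + 1) < 1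
  \<and> cn + \<delta> s > 1 \<and> e s < 1 \<and> \<alpha> s > 0 \<and> \<gamma> s > 0"

lemma eventually_admissible: "eventually admissible F"
proof -
  have "((\<lambda>s. t s ^ 2 * (\<bar>q_star\<bar> + 1)) \<longlongrightarrow> 0 ^ 2 * (\<bar>q_star\<bar> + 1)) F"
    by (intro tendsto_mult tendsto_power tendsto_const t_tendsto_0)
  then have "eventually (\<lambda>s. t s ^ 2 * (\<bar>q_star\<bar> + 1) < 1) F"
    using order_tendstoD(2) by fastforce
  moreover have "eventually (\<lambda>s. t s < 1) F"
    using order_tendstoD(2)[OF t_tendsto_0] by simp
  moreover have "eventually (\<lambda>s. \<alpha> s > 0) F" "eventually (\<lambda>s. \<gamma> s > 0) F"
    using order_tendstoD(1)[OF basic_limits(1)] order_tendstoD(1)[OF basic_limits(3)] by simp_all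
  ultimately show ?thesis
    using eventually_t_pos eventually_cn_plus_\<delta>_gt_1 eventually_e_lt_1 unfolding admissible_def
    by eventually_elim (intro conjI)
qed

definition "q_interval = {q_star - 1 .. q_star + 1}"

lemma admissible_pos:
  assumes "admissible s" "q \<in> q_interval"
  shows "1 + t s ^ 2 * q > 0" "t_minus_W s q > 0" "one_minus_W s q > 0"
proof -
  have adm: "0 < t s" "t s < 1" "t s ^ 2 * (\<bar>q_star\<bar> + 1) < 1" "cn + \<delta> s > 1"
    using assms(1) unfolding admissible_def by auto
  have "\<bar>q\<bar> \<le> \<bar>q_star\<bar> + 1" using assms(2) unfolding q_interval_def by auto
  then have "\<bar>t s ^ 2 * q\<bar> \<le> t s ^ 2 * (\<bar>q_star\<bar> + 1)"
    by (simp add: abs_mult mult_left_mono)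
  then show pos: "1 + t s ^ 2 * q > 0" using adm(3) by linarith
  show tW: "t_minus_W s q > 0" unfolding t_minus_W_def using adm pos by simp
  show "one_minus_W s q > 0" unfolding one_minus_W_def Wq_def using adm tW by simp
qed

lemma continuous_on_residual:
  assumes "admissible s"
  shows "continuous_on q_interval (residual s)"
proof -
  have nz: "t_minus_W s q \<noteq> 0" "one_minus_W s q \<noteq> 0" if "q \<in> q_interval" for q
    using admissible_pos[OF assms that] by auto
  have "cn + \<delta> s \<noteq> 0" "1 - e s \<noteq> 0" using assms unfolding admissible_def by auto
  then have tW: "continuous_on q_interval (t_minus_W s)"
    unfolding t_minus_W_def[abs_def] by (intro continuous_intros) auto
  then have oW: "continuous_on q_interval (one_minus_W s)"
    unfolding one_minus_W_def[abs_def] Wq_def by (intro continuous_intros)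
  show ?thesis unfolding residual_def[abs_def] Aq_def Yq_def Zq_def D1_def D1'_def Dt_def Dt'_def
    using nz \<open>1 - e s \<noteq> 0\<close> c1_ge_2 by (intro continuous_intros tW oW) auto
qed

lemma eventually_residual_root_near:
  assumes "0 < r" "r \<le> 1"
  shows "eventually (\<lambda>s. \<exists>x \<in> q_interval. \<bar>x - q_star\<bar> \<le> r \<and> residual s x = 0) F"
proof -
  have "Z_lim (q_star - r) > 0" "Z_lim (q_star + r) < 0"
    unfolding Z_lim_eq using c1_ge_2 cn_ge_2 assms by (simp_all add: mult_pos_neg)
  then have "eventually (\<lambda>s. residual s (q_star - r) / t s > 0) F"
    "eventually (\<lambda>s. residual s (q_star + r) / t s < 0) F"
    using order_tendstoD(1)[OF tendsto_residual[OF tendsto_const]]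
      order_tendstoD(2)[OF tendsto_residual[OF tendsto_const]] by blast+
  then show ?thesis using eventually_admissible
  proof eventually_elim
    case (elim s)
    have t: "t s > 0" using elim(3) unfolding admissible_def by simp
    have "residual s (q_star - r) \<ge> 0" "residual s (q_star + r) \<le> 0"
      using elim(1,2) t by (simp_all add: zero_less_divide_iff divide_less_0_iff)
    moreover have sub: "{q_star - r .. q_star + r} \<subseteq> q_interval"
      unfolding q_interval_def using assms by auto
    moreover note continuous_on_subset[OF continuous_on_residual[OF elim(3)] sub]
    ultimately obtain x where "q_star - r \<le> x" "x \<le> q_star + r" "residual s x = 0"
      using IVT2'[of "residual s" "q_star + r" 0 "q_star - r"] assms by auto
    then show ?case using sub by (intro bexI[of _ x]) (auto simp: abs_le_iff)
  qed
qed

text \<open>Choosing the root nearest to \<open>q_star\<close> is what makes the chosen roots converge to \<open>q_star\<close>.\<close>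
definition "q_root s = arg_min (\<lambda>y. \<bar>y - q_star\<bar>) (\<lambda>y. y \<in> q_interval \<and> residual s y = 0)"


lemma q_root_is_arg_min:
  assumes "admissible s" and "\<exists>x \<in> q_interval. residual s x = 0"
  shows "is_arg_min (\<lambda>y. \<bar>y - q_star\<bar>) (\<lambda>y. y \<in> q_interval \<and> residual s y = 0) (q_root s)"
proof -
  let ?R = "{y \<in> q_interval. residual s y = 0}"
  have "closed ?R" unfolding q_interval_def
    using continuous_closed_preimage_constant[OF continuous_on_residual[OF assms(1)]]
    by (simp add: q_interval_def)
  then have "compact (q_interval \<inter> ?R)" unfolding q_interval_def by (intro compact_Int_closed) auto
  then have "compact ?R" by (simp add: Int_absorb1)
  moreover have "?R \<noteq> {}" using assms(2) by blast
  moreover have "continuous_on ?R (\<lambda>y. \<bar>y - q_star\<bar>)" by (intro continuous_intros)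
  ultimately obtain x where "x \<in> ?R" "\<forall>y \<in> ?R. \<bar>x - q_star\<bar> \<le> \<bar>y - q_star\<bar>"
    using continuous_attains_inf by blast
  then have "\<exists>x. is_arg_min (\<lambda>y. \<bar>y - q_star\<bar>) (\<lambda>y. y \<in> q_interval \<and> residual s y = 0) x"
    unfolding is_arg_min_linorder by auto
  then show ?thesis unfolding q_root_def arg_min_def by (rule someI_ex)
qed

lemma eventually_q_root: "eventually (\<lambda>s. admissible s \<and> q_root s \<in> q_interval \<and> residual s (q_root s) = 0) F"
  using eventually_residual_root_near[OF zero_less_one order_refl] eventually_admissible
proof eventually_elim
  case (elim s)
  then show ?case using q_root_is_arg_min[of s] unfolding is_arg_min_linorder by blast
qed

lemma tendsto_q_root: "(q_root \<longlongrightarrow> q_star) F"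
proof (rule tendstoI)
  fix r :: real assume r: "r > 0"
  then have "0 < min (r / 2) 1" by simp
  from eventually_residual_root_near[OF this min.cobounded2] eventually_admissible
  show "eventually (\<lambda>s. dist (q_root s) q_star < r) F"
  proof eventually_elim
    case (elim s)
    then obtain x where x: "x \<in> q_interval" "residual s x = 0" "\<bar>x - q_star\<bar> \<le> min (r / 2) 1"
      by blast
    then have "\<bar>q_root s - q_star\<bar> \<le> \<bar>x - q_star\<bar>"
      using q_root_is_arg_min[OF elim(2)] unfolding is_arg_min_linorder by blast
    then show ?case using x(3) r unfolding dist_real_def by linarith
  qed
qed

definition "Dpoly X Y Z z = (c1 - 1) * X * z ^ d1 + Y * z + Z"
definition "Dpoly' X Y z = (c1 - 1) * X * (c1 * z ^ (d1 - 1)) + Y"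

definition "interpolates s X Y Z W \<longleftrightarrow>
    Dpoly X Y Z 1 \<noteq> 0 \<and> N1 s / Dpoly X Y Z 1 + W = 1
  \<and> (N1' s * Dpoly X Y Z 1 - N1 s * Dpoly' X Y 1) / (Dpoly X Y Z 1)^2 = 1
  \<and> Dpoly X Y Z (t s) \<noteq> 0 \<and> Nt s / Dpoly X Y Z (t s) + W = t s
  \<and> (Nt' s * Dpoly X Y Z (t s) - Nt s * Dpoly' X Y (t s)) / (Dpoly X Y Z (t s))^2 = 1"

lemma interpolates_at_root:
  assumes adm: "admissible s" and q: "q \<in> q_interval" and root: "residual s q = 0"
  shows "interpolates s (Aq s q / (c1 - 1)) (Yq s q) (Zq s q) (Wq s q)"
proof -
  let ?X = "Aq s q / (c1 - 1)"
  have X: "(c1 - 1) * ?X = Aq s q" using c1_ge_2 by simp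
  note pos = admissible_pos[OF adm q]
  have "N1 s > 0" "Nt s > 0"
    using adm c1_ge_2 cn_ge_2 unfolding admissible_def N1_def Nt_def by auto
  then have N: "N1 s = D1 s q * one_minus_W s q" "Nt s = Dt s q * t_minus_W s q"
    and D_pos: "D1 s q > 0" "Dt s q > 0"
    using pos unfolding D1_def Dt_def by auto
  have e: "1 - e s \<noteq> 0" using adm unfolding admissible_def by simp
  have at_1: "Dpoly ?X (Yq s q) (Zq s q) 1 = D1 s q" "Dpoly' ?X (Yq s q) 1 = D1' s q"
    using c1_ge_2 by (simp_all add: Dpoly_def Dpoly'_def X Zq_def Yq_def)
  have at_t: "Dpoly ?X (Yq s q) (Zq s q) (t s) = Dt s q"
    using root c1_ge_2 by (simp add: Dpoly_def X residual_def)
  have "Dpoly' ?X (Yq s q) (t s) = D1' s q - c1 * (1 - e s) * Aq s q"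
    unfolding Dpoly'_def X Yq_def e_def by (simp add: algebra_simps)
  also have "c1 * (1 - e s) * Aq s q = D1' s q - Dt' s q"
    unfolding Aq_def using e c1_ge_2 by simp
  finally have at_t': "Dpoly' ?X (Yq s q) (t s) = Dt' s q" by simp
  have W: "Wq s q = 1 - one_minus_W s q" "Wq s q = t s - t_minus_W s q"
    unfolding one_minus_W_def Wq_def by simp_all
  show ?thesis unfolding interpolates_def at_1 at_t at_t'
  proof (intro conjI)
    show "D1 s q \<noteq> 0" "Dt s q \<noteq> 0" using D_pos by simp_all
    show "N1 s / D1 s q + Wq s q = 1" using D_pos by (simp add: N W(1))
    show "Nt s / Dt s q + Wq s q = t s" using D_pos by (simp add: N W(2))
    show "(N1' s * D1 s q - N1 s * D1' s q) / (D1 s q)^2 = 1"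
      "(Nt' s * Dt s q - Nt s * Dt' s q) / (Dt s q)^2 = 1"
      using D_pos pos by (simp_all add: N D1'_def Dt'_def field_simps power2_eq_square)
  qed
qed

theorem exists_interpolating_family:
  "\<exists>X Y Z W :: real \<Rightarrow> real. eventually (\<lambda>s. interpolates s (X s) (Y s) (Z s) (W s)) F
    \<and> ((\<lambda>s. (X s - 1) / t s) \<longlongrightarrow> c1 * (c1 - 3) * (cn - 1) / ((c1 - 1)^2 * cn)) F
    \<and> ((\<lambda>s. Y s / t s) \<longlongrightarrow> 2 * c1 * (cn - 1) / ((c1 - 1) * cn)) F
    \<and> ((\<lambda>s. (Z s - 1) / t s) \<longlongrightarrow> 0) F
    \<and> ((\<lambda>s. W s / t s) \<longlongrightarrow> (cn - 1) / cn) F"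
proof (intro exI conjI)
  show "eventually (\<lambda>s. interpolates s (Aq s (q_root s) / (c1 - 1)) (Yq s (q_root s))
      (Zq s (q_root s)) (Wq s (q_root s))) F"
    using eventually_q_root by eventually_elim (auto intro: interpolates_at_root)
  show "((\<lambda>s. (Aq s (q_root s) / (c1 - 1) - 1) / t s)
      \<longlongrightarrow> c1 * (c1 - 3) * (cn - 1) / ((c1 - 1)^2 * cn)) F"
  proof (rule Lim_transform_eventually_eq)
    show "((\<lambda>s. (Aq s (q_root s) - (c1 - 1)) / t s / (c1 - 1)) \<longlongrightarrow> A_lim q_star / (c1 - 1)) F"
      using c1_ge_2 by (intro tendsto_divide tendsto_Aq tendsto_q_root tendsto_const) auto
    show "\<forall>\<^sub>F s in F. (Aq s (q_root s) - (c1 - 1)) / t s / (c1 - 1) = (Aq s (q_root s) / (c1 - 1) - 1) / t s"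
      using c1_ge_2 by (intro always_eventually allI) (simp add: field_simps)
    show "A_lim q_star / (c1 - 1) = c1 * (c1 - 3) * (cn - 1) / ((c1 - 1)^2 * cn)"
      unfolding A_lim_q_star wlim_eq by (simp add: power2_eq_square)
  qed
  show "((\<lambda>s. Yq s (q_root s) / t s) \<longlongrightarrow> 2 * c1 * (cn - 1) / ((c1 - 1) * cn)) F"
    using tendsto_Yq[OF tendsto_q_root] by (simp add: Y_lim_q_star wlim_eq ac_simps)
  show "((\<lambda>s. (Zq s (q_root s) - 1) / t s) \<longlongrightarrow> 0) F"
    using tendsto_Zq[OF tendsto_q_root] by (simp add: Z_lim_eq)
  show "((\<lambda>s. Wq s (q_root s) / t s) \<longlongrightarrow> (cn - 1) / cn) F"
    using tendsto_Wq[OF tendsto_q_root] by (simp add: wlim_eq)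
qed

end

locale Qn_data =
  fixes n :: nat and d :: "nat \<Rightarrow> nat"
  assumes n_ge_3: "n \<ge> 3" and n_odd: "odd n" and d_pos: "\<forall>i\<in>{1..n}. d i > 0"
    and sum_recip_lt_1: "(\<Sum>i=1..n. 1 / real (d i)) < 1"
begin

definition "psum i = (\<Sum>j=1..i. 1 / real (d j))"
definition "\<sigma> = psum (n - 1)"
abbreviation "\<nu> \<equiv> nu d n"
abbreviation "\<tau> \<equiv> tau d n"
definition "M = real (dmax d n)"
definition "c0 = 2 * ln M / real (d 1)"

lemma d_ge_2: "i \<in> {1..n} \<Longrightarrow> d i \<ge> 2"
proof -
  assume i: "i \<in> {1..n}"
  have "1 / real (d i) \<le> (\<Sum>i=1..n. 1 / real (d i))"
    by (rule member_le_sum) (use i in auto)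
  then have "1 / real (d i) < 1" using sum_recip_lt_1 by linarith
  moreover have "d i > 0" using d_pos i by auto
  ultimately show "d i \<ge> 2" by (cases "d i = 1") auto
qed

lemma d_first_ge_2: "d 1 \<ge> 2" using d_ge_2[of 1] n_ge_3 by auto
lemma d_last_ge_2: "d n \<ge> 2" using d_ge_2[of n] n_ge_3 by auto

lemma M_pos: "M > 0"
proof -
  have "d 1 \<in> d ` {1..n}" using n_ge_3 by auto
  then have "d 1 \<le> dmax d n" unfolding dmax_def by (intro Max_ge) auto
  then show ?thesis unfolding M_def using d_first_ge_2 by simp
qed

lemma sum_recip_split: "(\<Sum>i=1..n. 1 / real (d i)) = \<sigma> + 1 / real (d n)"
proof -
  have "{1..n} = insert n {1..n-1}" using n_ge_3 by auto
  moreover have "n \<notin> {1..n-1}" using n_ge_3 by auto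
  ultimately show ?thesis unfolding \<sigma>_def psum_def by (simp add: sum.insert)
qed

lemma sigma_pos: "\<sigma> > 0"
proof -
  have "1 / real (d 1) \<le> \<sigma>" unfolding \<sigma>_def psum_def
    by (rule member_le_sum) (use n_ge_3 in auto)
  moreover have "1 / real (d 1) > 0" using d_first_ge_2 by simp
  ultimately show ?thesis by linarith
qed

lemma sigma_lt: "\<sigma> < 1 - 1 / real (d n)" using sum_recip_lt_1 sum_recip_split by linarith

lemma nu_eq_sigma: "\<nu> = real (d n) / (real (d n) - 1) * \<sigma>"
  unfolding nu_def \<sigma>_def psum_def ..

lemma nu_pos: "\<nu> > 0" using nu_eq_sigma sigma_pos d_last_ge_2 by simp

lemma nu_lt_1: "\<nu> < 1"
proof -
  have dn1: "real (d n) - 1 > 0" using d_last_ge_2 by simp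
  have "real (d n) * \<sigma> < real (d n) - 1"
    using sigma_lt d_last_ge_2 by (simp add: field_simps)
  then show ?thesis unfolding nu_eq_sigma using dn1 by (simp add: field_simps)
qed

lemma sum_last_over_d: "(\<Sum>i=1..n-1. real (d n) / real (d i)) = real (d n) * \<sigma>"
  unfolding \<sigma>_def psum_def by (simp add: sum_distrib_left)

lemma tau_pos: "\<tau> > 0"
  unfolding tau_def using d_first_ge_2 d_last_ge_2 M_pos unfolding M_def by simp

lemma ln_tau: "real (d n) * \<sigma> * ln \<tau> = ln (real (d 1)) + ln (real (d n)) + 2 * (real (d 1) - real (d n)) / real (d 1) * ln M"
proof -
  have p: "real (d 1) * real (d n) * M powr (2 * (real (d 1) - real (d n)) / real (d 1)) > 0"
    using d_first_ge_2 d_last_ge_2 M_pos by simp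
  have "ln \<tau> = (1 / (real (d n) * \<sigma>)) * ln (real (d 1) * real (d n) * M powr (2 * (real (d 1) - real (d n)) / real (d 1)))"
    unfolding tau_def sum_last_over_d M_def[symmetric] using p by (simp add: ln_powr)
  also have "ln (real (d 1) * real (d n) * M powr (2 * (real (d 1) - real (d n)) / real (d 1)))
     = ln (real (d 1)) + ln (real (d n)) + 2 * (real (d 1) - real (d n)) / real (d 1) * ln M"
    using d_first_ge_2 d_last_ge_2 M_pos by (simp add: ln_mult ln_powr)
  finally show ?thesis using sigma_pos d_last_ge_2 by (simp add: field_simps)
qed

lemma bval_pos_ln:
  assumes "s > 0"
  shows "bval d n s (Suc k) > 0 \<and> ln (bval d n s (Suc k)) = c0 + psum (Suc k) * (ln \<tau> + ln s)"
proof (induction k)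
  case 0
  have p: "M ^ 2 * \<tau> * s > 0" using M_pos tau_pos assms by simp
  have "bval d n s (Suc 0) = (M ^ 2 * \<tau> * s) powr (1 / real (d 1))"
    unfolding M_def by simp
  moreover have "ln ((M ^ 2 * \<tau> * s) powr (1 / real (d 1))) = c0 + psum (Suc 0) * (ln \<tau> + ln s)"
  proof -
    have "ln ((M ^ 2 * \<tau> * s) powr (1 / real (d 1))) = (2 * ln M + (ln \<tau> + ln s)) / real (d 1)"
      using p M_pos tau_pos assms by (simp add: ln_powr ln_mult ln_realpow)
    then show ?thesis unfolding c0_def psum_def by (simp add: add_divide_distrib)
  qed
  ultimately show ?case using p M_pos tau_pos assms by simp
next
  case (Suc k)
  have p: "\<tau> * s > 0" using tau_pos assms by simp
  have "bval d n s (Suc (Suc k)) = (\<tau> * s) powr (1 / real (d (Suc (Suc k)))) * bval d n s (Suc k)"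
    by simp
  moreover have "psum (Suc (Suc k)) = psum (Suc k) + 1 / real (d (Suc (Suc k)))"
    unfolding psum_def by simp
  ultimately show ?case using Suc p assms tau_pos
    by (simp add: ln_mult ln_powr field_simps)
qed


definition "D i = d i + d (Suc i)"
definition "t s = s powr \<nu>"

lemma D_ge_1: "i \<in> {1..n-1} \<Longrightarrow> D i \<ge> 1"
proof -
  assume "i \<in> {1..n-1}"
  then have "d i \<ge> 2" using d_ge_2[of i] by auto
  then show ?thesis unfolding D_def by simp
qed

lemma psum_Suc: "psum (Suc i) = psum i + 1 / real (d (Suc i))" unfolding psum_def by simp

lemma psum_mono: "i \<le> j \<Longrightarrow> psum i \<le> psum j"
  unfolding psum_def by (rule sum_mono2) auto

lemma psum_ge: "i \<ge> 1 \<Longrightarrow> psum i \<ge> 1 / real (d i)"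
  unfolding psum_def by (rule member_le_sum) auto

lemma nu_lt_D_psum:
  assumes "i \<in> {1..n-1}"
  shows "real (D i) * psum i > \<nu>"
proof -
  have di: "d i \<ge> 2" "d (Suc i) \<ge> 2" using d_ge_2[of i] d_ge_2[of "Suc i"] assms by auto
  have "real (d i) * psum i \<ge> real (d i) * (1 / real (d i))"
    using psum_ge[of i] assms di by (intro mult_left_mono) auto
  then have 1: "real (d i) * psum i \<ge> 1" using di by simp
  have 2: "real (d (Suc i)) * psum i > 0" using psum_ge[of i] assms di
    by (intro mult_pos_pos) (auto intro: less_le_trans[of _ "1 / real (d i)"])
  have "real (D i) * psum i = real (d i) * psum i + real (d (Suc i)) * psum i"
    unfolding D_def by (simp add: algebra_simps)
  then show ?thesis using 1 2 nu_lt_1 by linarith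
qed

lemma nu_lt_D_mult_nu_minus_psum:
  assumes "i \<in> {1..n-1}"
  shows "real (D i) * (\<nu> - psum i) - \<nu> > 0"
proof -
  have di: "d i \<ge> 2" "d (Suc i) \<ge> 2" using d_ge_2[of i] d_ge_2[of "Suc i"] assms by auto
  have dn1: "real (d n) - 1 > 0" using d_last_ge_2 by simp
  define rho where "rho = \<nu> - \<sigma>"
  have rho: "rho = \<sigma> / (real (d n) - 1)" unfolding rho_def nu_eq_sigma using dn1 by (simp add: field_simps)
  have rp: "rho > 0" unfolding rho using sigma_pos dn1 by simp
  have nur: "\<nu> = real (d n) * rho" unfolding rho nu_eq_sigma by simp
  show ?thesis
  proof (cases "i = n - 1")
    case True
    then have "psum i = \<sigma>" unfolding \<sigma>_def by simp
    then have "real (D i) * (\<nu> - psum i) = (real (d i) + real (d n)) * rho"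
      unfolding D_def rho_def using True n_ge_3 by simp
    then show ?thesis using nur rp di by (simp add: algebra_simps)
  next
    case False
    then have "Suc i \<le> n - 1" using assms by auto
    then have "psum (Suc i) \<le> \<sigma>" unfolding \<sigma>_def by (rule psum_mono)
    then have "\<sigma> - psum i \<ge> 1 / real (d (Suc i))" using psum_Suc[of i] by simp
    then have "real (D i) * (\<sigma> - psum i) \<ge> real (D i) * (1 / real (d (Suc i)))"
      by (intro mult_left_mono) auto
    moreover have "real (D i) * (1 / real (d (Suc i))) \<ge> 1"
      using di unfolding D_def by (simp add: field_simps)
    moreover have "real (D i) * (\<nu> - psum i) = real (D i) * rho + real (D i) * (\<sigma> - psum i)"
      unfolding rho_def by (simp add: algebra_simps)
    moreover have "real (D i) * rho > 0" using rp di unfolding D_def by simp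
    ultimately show ?thesis using nu_lt_1 by linarith
  qed
qed

lemma bval_pos: "s > 0 \<Longrightarrow> i \<ge> 1 \<Longrightarrow> bval d n s i > 0"
  using bval_pos_ln[of s "i - 1"] by simp

lemma bval_eq_exp: "s > 0 \<Longrightarrow> i \<ge> 1 \<Longrightarrow> bval d n s i = exp (c0 + psum i * (ln \<tau> + ln s))"
  using bval_pos_ln[of s "i - 1"] by (metis Suc_diff_1 exp_ln less_le_trans zero_less_one)

lemma t_eq_exp: "s > 0 \<Longrightarrow> t s = exp (\<nu> * ln s)"
  unfolding t_def powr_def by simp

lemma tendsto_bval_pow_over_t:
  assumes "i \<in> {1..n-1}"
  shows "((\<lambda>s. bval d n s i ^ D i / t s) \<longlongrightarrow> 0) (at_right 0)"
proof (rule tendsto_0_at_right_if_eq_exp_ln)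
  show "real (D i) * psum i - \<nu> > 0" using nu_lt_D_psum[OF assms] by simp
  fix s :: real assume "0 < s" "s < 1"
  then show "bval d n s i ^ D i / t s
      = exp (real (D i) * (c0 + psum i * ln \<tau>) + (real (D i) * psum i - \<nu>) * ln s)"
    using assms
    by (simp add: bval_eq_exp t_eq_exp algebra_simps flip: exp_of_nat_mult exp_diff)
qed

lemma tendsto_t_over_bval_pow_over_t:
  assumes "i \<in> {1..n-1}"
  shows "((\<lambda>s. (t s / bval d n s i) ^ D i / t s) \<longlongrightarrow> 0) (at_right 0)"
proof (rule tendsto_0_at_right_if_eq_exp_ln)
  show "real (D i) * (\<nu> - psum i) - \<nu> > 0" using nu_lt_D_mult_nu_minus_psum[OF assms] by simp
  fix s :: real assume "0 < s" "s < 1"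
  then show "(t s / bval d n s i) ^ D i / t s
      = exp (- real (D i) * (c0 + psum i * ln \<tau>) + (real (D i) * (\<nu> - psum i) - \<nu>) * ln s)"
    using assms
    by (simp add: bval_eq_exp t_eq_exp algebra_simps flip: exp_of_nat_mult exp_diff)
qed

definition "expo i = ((-1::int) ^ (i - 1))"

lemma expo_cases: "expo i = 1 \<or> expo i = -1" unfolding expo_def by (simp add: minus_one_power_iff)

lemma of_int_expo: "real_of_int (expo i) = (-1::real) ^ (i - 1)" unfolding expo_def by simp

lemma alt_sum_D_affine:
  assumes "Suc k \<le> n - 1"
  shows "(\<Sum>i=1..Suc k. (-1::real) ^ (i - 1) * real (D i) * (c + psum i * l))
     = real (d 1) * (c + psum 1 * l) - (if even k then 0 else l)
       + (-1) ^ k * real (d (Suc (Suc k))) * (c + psum (Suc k) * l)"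
  using assms
proof (induction k)
  case 0
  then show ?case unfolding D_def by (simp add: algebra_simps)
next
  case (Suc k)
  have "d (Suc (Suc k)) \<ge> 2" using Suc.prems by (intro d_ge_2) auto
  then have pos: "real (d (Suc (Suc k))) > 0" by simp
  have "(\<Sum>i=1..Suc (Suc k). (-1::real) ^ (i - 1) * real (D i) * (c + psum i * l))
      = (\<Sum>i=1..Suc k. (-1::real) ^ (i - 1) * real (D i) * (c + psum i * l))
        + (-1) ^ Suc k * real (D (Suc (Suc k))) * (c + psum (Suc (Suc k)) * l)"
    by simp
  also have "(\<Sum>i=1..Suc k. (-1::real) ^ (i - 1) * real (D i) * (c + psum i * l))
      = real (d 1) * (c + psum 1 * l) - (if even k then 0 else l)
        + (-1) ^ k * real (d (Suc (Suc k))) * (c + psum (Suc k) * l)"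
    using Suc by simp
  finally show ?case
    using pos by (cases "even k") (simp_all add: D_def psum_Suc[of "Suc k"] field_simps)
qed

lemma even_n_minus_1: "even (n - 1)" using n_odd n_ge_3 by simp

lemma sum_expo_D_affine:
  "(\<Sum>i=1..n-1. real_of_int (expo i) * real (D i) * (c + psum i * l))
     = (real (d 1) - real (d n)) * c - real (d n) * \<sigma> * l"
proof -
  obtain k where k: "n - 1 = Suc k" using n_ge_3 by (cases "n - 1") auto
  have "odd k" using n_odd k n_ge_3 by presburger
  moreover have "Suc (Suc k) = n" using k n_ge_3 by simp
  moreover have "real (d 1) * psum 1 = 1" unfolding psum_def using d_first_ge_2 by simp
  ultimately show ?thesis unfolding of_int_expo k using alt_sum_D_affine[of k c l] k
    by (simp add: \<sigma>_def algebra_simps)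
qed

lemma sum_expo_D: "(\<Sum>i=1..n-1. real_of_int (expo i) * real (D i)) = real (d 1) - real (d n)"
  using sum_expo_D_affine[of 1 0] by simp

lemma prod_minus_bval_pow:
  assumes s: "s > 0"
  shows "(\<Prod>i=1..n-1. (- (bval d n s i ^ D i)) powi expo i)
    = exp ((real (d 1) - real (d n)) * c0 - real (d n) * \<sigma> * (ln \<tau> + ln s))"
proof -
  define L where "L i = c0 + psum i * (ln \<tau> + ln s)" for i
  have "(- (bval d n s i ^ D i)) powi expo i = - exp (real_of_int (expo i) * real (D i) * L i)"
    if "i \<in> {1..n-1}" for i
  proof -
    have "bval d n s i ^ D i = exp (real (D i) * L i)"
      using bval_eq_exp[OF s, of i] that by (simp add: L_def exp_of_nat_mult)
    then show ?thesis
      using minus_power_int_unit[OF expo_cases] by (simp add: exp_power_int mult.assoc)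
  qed
  then have "(\<Prod>i=1..n-1. (- (bval d n s i ^ D i)) powi expo i)
      = (\<Prod>i=1..n-1. - exp (real_of_int (expo i) * real (D i) * L i))"
    by (rule prod.cong[OF refl])
  also have "\<dots> = exp (\<Sum>i=1..n-1. real_of_int (expo i) * real (D i) * L i)"
    using even_n_minus_1 unfolding prod_uminus by (simp add: exp_sum)
  finally show ?thesis unfolding L_def sum_expo_D_affine .
qed

text \<open>This is where the choice of \<open>\<tau>\<close> enters.\<close>
lemma normalisation:
  assumes s: "s > 0"
  shows "real (d 1) * real (d n) * t s ^ (d n - 1) * (\<Prod>i=1..n-1. (- (bval d n s i ^ D i)) powi expo i) = 1"
proof -
  have "real (d n - 1) * \<nu> = real (d n) * \<sigma>"
    unfolding nu_eq_sigma using d_last_ge_2 by (simp add: of_nat_diff field_simps)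
  then have "t s ^ (d n - 1) = exp (real (d n) * \<sigma> * ln s)"
    unfolding t_eq_exp[OF s] exp_of_nat_mult[symmetric] by (simp add: mult.assoc[symmetric])
  moreover have "real (d 1) * real (d n) = exp (ln (real (d 1)) + ln (real (d n)))"
    using d_first_ge_2 d_last_ge_2 by (simp add: exp_add)
  moreover have "ln (real (d 1)) + ln (real (d n)) + real (d n) * \<sigma> * ln s
      + ((real (d 1) - real (d n)) * c0 - real (d n) * \<sigma> * (ln \<tau> + ln s)) = 0"
    using ln_tau unfolding c0_def by (simp add: algebra_simps)
  ultimately show ?thesis unfolding prod_minus_bval_pow[OF s] by (simp flip: exp_add)
qed

definition "factor s z i = z ^ D i - bval d n s i ^ D i"
definition "P s z = (\<Prod>i=1..n-1. factor s z i powi expo i)"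
definition "dlogP s z = (\<Sum>i=1..n-1. real_of_int (expo i) * (real (D i) * z ^ (D i - 1)) / factor s z i)"

lemma t_tendsto_0: "(t \<longlongrightarrow> 0) (at_right 0)"
  by (rule tendsto_0_at_right_if_eq_exp_ln[OF nu_pos, of _ 0]) (simp add: t_eq_exp)

lemma eventually_t_pos: "eventually (\<lambda>s. t s > 0) (at_right 0)"
  unfolding eventually_at_right_field by (intro exI[of _ 1]) (auto simp: t_def)

lemma eventually_t_ne_0: "eventually (\<lambda>s. t s \<noteq> 0) (at_right 0)"
  using eventually_t_pos by eventually_elim simp

lemma tendsto_bval_pow: "i \<in> {1..n-1} \<Longrightarrow> ((\<lambda>s. bval d n s i ^ D i) \<longlongrightarrow> 0) (at_right 0)"
  using tendsto_0_of_ratio[OF t_tendsto_0 eventually_t_ne_0 tendsto_bval_pow_over_t] by simp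

lemma tendsto_t_over_bval_pow: "i \<in> {1..n-1} \<Longrightarrow> ((\<lambda>s. (t s / bval d n s i) ^ D i) \<longlongrightarrow> 0) (at_right 0)"
  using tendsto_0_of_ratio[OF t_tendsto_0 eventually_t_ne_0 tendsto_t_over_bval_pow_over_t] by simp

lemma P_1_eq: "P s 1 = (\<Prod>i=1..n-1. (1 - bval d n s i ^ D i) powi expo i)"
  unfolding P_def factor_def by simp

lemma P_1_asymp: "((\<lambda>s. (P s 1 - 1) / t s) \<longlongrightarrow> 0) (at_right 0)"
  unfolding P_1_eq
  by (rule tendsto_prod_minus_1_over[OF _ t_tendsto_0 eventually_t_ne_0])
    (auto intro!: tendsto_power_int_minus_1_over[OF t_tendsto_0 eventually_t_ne_0]
      tendsto_bval_pow_over_t expo_cases)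

lemma eventually_bval_pow_lt_1: "eventually (\<lambda>s. \<forall>i\<in>{1..n-1}. bval d n s i ^ D i < 1) (at_right 0)"
  by (rule eventually_ball_finite) (auto intro: order_tendstoD(2)[OF tendsto_bval_pow])

lemma eventually_t_over_bval_pow_lt_1: "eventually (\<lambda>s. \<forall>i\<in>{1..n-1}. (t s / bval d n s i) ^ D i < 1) (at_right 0)"
  by (rule eventually_ball_finite) (auto intro: order_tendstoD(2)[OF tendsto_t_over_bval_pow])

lemma dlogP_1_asymp:
  "((\<lambda>s. (dlogP s 1 - (real (d 1) - real (d n))) / t s) \<longlongrightarrow> 0) (at_right 0)"
proof (rule Lim_transform_eventually_eq)
  let ?r = "\<lambda>s i. bval d n s i ^ D i"
  show "((\<lambda>s. \<Sum>i=1..n-1. of_int (expo i) * real (D i) * ((?r s i / t s) / (1 - ?r s i)))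
      \<longlongrightarrow> (\<Sum>i=1..n-1. of_int (expo i) * real (D i) * (0 / (1 - 0)))) (at_right 0)"
    by (intro tendsto_intros tendsto_bval_pow_over_t tendsto_bval_pow) auto
  show "eventually (\<lambda>s. (\<Sum>i=1..n-1. of_int (expo i) * real (D i) * ((?r s i / t s) / (1 - ?r s i)))
      = (dlogP s 1 - (real (d 1) - real (d n))) / t s) (at_right 0)"
    using eventually_bval_pow_lt_1 eventually_t_ne_0
  proof eventually_elim
    case (elim s)
    have "dlogP s 1 - (real (d 1) - real (d n))
        = (\<Sum>i=1..n-1. of_int (expo i) * real (D i) * (1 / (1 - ?r s i) - 1))"
      unfolding sum_expo_D[symmetric] dlogP_def factor_def
      by (simp add: sum_subtractf[symmetric] algebra_simps)
    also have "\<dots> = (\<Sum>i=1..n-1. of_int (expo i) * real (D i) * (?r s i / (1 - ?r s i)))"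
    proof (rule sum.cong[OF refl])
      fix i assume "i \<in> {1..n-1}"
      then have "1 - ?r s i \<noteq> 0" using elim(1) by fastforce
      then show "of_int (expo i) * real (D i) * (1 / (1 - ?r s i) - 1)
          = of_int (expo i) * real (D i) * (?r s i / (1 - ?r s i))"
        by (simp add: field_simps)
    qed
    finally show ?case using elim(2) by (simp add: sum_divide_distrib mult.commute)
  qed
qed simp

lemma P_t_eq:
  assumes s: "s > 0"
  shows "real (d 1) * real (d n) * t s ^ (d n - 1) * P s (t s)
    = (\<Prod>i=1..n-1. (1 - (t s / bval d n s i) ^ D i) powi expo i)"
proof -
  have "factor s (t s) i powi expo i
      = (- (bval d n s i ^ D i)) powi expo i * (1 - (t s / bval d n s i) ^ D i) powi expo i"
    if i: "i \<in> {1..n-1}" for i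
  proof -
    have "bval d n s i > 0" using bval_pos[OF s] i by simp
    then have "factor s (t s) i = (- (bval d n s i ^ D i)) * (1 - (t s / bval d n s i) ^ D i)"
      unfolding factor_def by (simp add: power_divide field_simps)
    then show ?thesis by (simp only: power_int_mult_distrib)
  qed
  then have "P s (t s) = (\<Prod>i=1..n-1. (- (bval d n s i ^ D i)) powi expo i)
      * (\<Prod>i=1..n-1. (1 - (t s / bval d n s i) ^ D i) powi expo i)"
    unfolding P_def prod.distrib[symmetric] by (rule prod.cong[OF refl])
  then show ?thesis using normalisation[OF s] by (simp add: mult.assoc[symmetric])
qed

lemma P_t_asymp:
  "((\<lambda>s. (real (d 1) * real (d n) * t s ^ (d n - 1) * P s (t s) - 1) / t s) \<longlongrightarrow> 0) (at_right 0)"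
proof (rule Lim_transform_eventually)
  show "((\<lambda>s. ((\<Prod>i=1..n-1. (1 - (t s / bval d n s i) ^ D i) powi expo i) - 1) / t s)
      \<longlongrightarrow> 0) (at_right 0)"
    by (rule tendsto_prod_minus_1_over[OF _ t_tendsto_0 eventually_t_ne_0])
      (auto intro!: tendsto_power_int_minus_1_over[OF t_tendsto_0 eventually_t_ne_0]
        tendsto_t_over_bval_pow_over_t expo_cases)
  show "eventually (\<lambda>s. ((\<Prod>i=1..n-1. (1 - (t s / bval d n s i) ^ D i) powi expo i) - 1) / t s
      = (real (d 1) * real (d n) * t s ^ (d n - 1) * P s (t s) - 1) / t s) (at_right 0)"
    using eventually_at_right_less by eventually_elim (simp only: P_t_eq)
qed

lemma dlogP_t_asymp: "((\<lambda>s. dlogP s (t s)) \<longlongrightarrow> 0) (at_right 0)"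
proof (rule Lim_transform_eventually_eq)
  let ?u = "\<lambda>s i. (t s / bval d n s i) ^ D i"
  show "((\<lambda>s. \<Sum>i=1..n-1. of_int (expo i) * real (D i) * ((?u s i / t s) / (?u s i - 1)))
      \<longlongrightarrow> (\<Sum>i=1..n-1. of_int (expo i) * real (D i) * (0 / (0 - 1)))) (at_right 0)"
    by (intro tendsto_intros tendsto_t_over_bval_pow_over_t tendsto_t_over_bval_pow) auto
  show "eventually (\<lambda>s. (\<Sum>i=1..n-1. of_int (expo i) * real (D i) * ((?u s i / t s) / (?u s i - 1)))
      = dlogP s (t s)) (at_right 0)"
    using eventually_t_pos eventually_at_right_less
  proof eventually_elim
    case (elim s)
    have "of_int (expo i) * real (D i) * ((?u s i / t s) / (?u s i - 1))
        = of_int (expo i) * (real (D i) * t s ^ (D i - 1)) / factor s (t s) i"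
      if i: "i \<in> {1..n-1}" for i
    proof -
      have "bval d n s i > 0" using bval_pos[OF elim(2)] i by simp
      moreover obtain m where "D i = Suc m" using D_ge_1[OF i] by (cases "D i") auto
      ultimately show ?thesis
        unfolding factor_def using elim(1) by (simp add: power_divide field_simps)
    qed
    then show ?case unfolding dlogP_def by (rule sum.cong[OF refl])
  qed
qed simp

lemma Qn_eq: "Qn d n s X Y Z W
    = (\<lambda>z. real (d 1) * z ^ d n * P s z / ((real (d 1) - 1) * X * z ^ d 1 + Y * z + Z) + W)"
  by (rule ext) (simp add: Qn_def P_def factor_def D_def expo_def)

lemma has_real_derivative_P:
  assumes factor: "\<forall>i\<in>{1..n-1}. factor s z i \<noteq> 0"
  shows "(P s has_real_derivative P s z * dlogP s z) (at z)"
proof -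
  have "\<forall>i\<in>{1..n-1}. ((\<lambda>z. factor s z i) has_real_derivative real (D i) * z ^ (D i - 1)) (at z)"
    unfolding factor_def by (auto intro!: derivative_eq_intros)
  from has_real_derivative_prod_power_int[OF _ this factor, of expo]
  show ?thesis unfolding P_def[abs_def] dlogP_def by simp
qed

lemma has_real_derivative_Qn:
  assumes factor: "\<forall>i\<in>{1..n-1}. factor s z i \<noteq> 0"
    and den: "(real (d 1) - 1) * X * z ^ d 1 + Y * z + Z \<noteq> 0"
  shows "(Qn d n s X Y Z W has_real_derivative
    ((real (d 1) * real (d n) * z ^ (d n - 1) * P s z + real (d 1) * z ^ d n * (P s z * dlogP s z))
       * ((real (d 1) - 1) * X * z ^ d 1 + Y * z + Z)
     - real (d 1) * z ^ d n * P s z * ((real (d 1) - 1) * X * (real (d 1) * z ^ (d 1 - 1)) + Y))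
    / ((real (d 1) - 1) * X * z ^ d 1 + Y * z + Z)^2) (at z)"
  unfolding Qn_eq
proof (rule DERIV_divide_plus_const)
  show "((\<lambda>z. real (d 1) * z ^ d n * P s z) has_real_derivative
      real (d 1) * real (d n) * z ^ (d n - 1) * P s z + real (d 1) * z ^ d n * (P s z * dlogP s z)) (at z)"
    by (auto intro!: derivative_eq_intros has_real_derivative_P[OF factor] simp: algebra_simps)
  show "((\<lambda>z. (real (d 1) - 1) * X * z ^ d 1 + Y * z + Z) has_real_derivative
      (real (d 1) - 1) * X * (real (d 1) * z ^ (d 1 - 1)) + Y) (at z)"
    by (auto intro!: derivative_eq_intros)
qed (rule den)

definition "\<alpha> s = P s 1"
definition "\<beta> s = dlogP s 1"
definition "\<gamma> s = real (d 1) * real (d n) * t s ^ (d n - 1) * P s (t s)"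
definition "\<delta> s = t s * dlogP s (t s)"

sublocale I: interpolation "d 1" "d n" "at_right 0" t \<alpha> \<beta> \<gamma> \<delta>
proof unfold_locales
  show "((\<lambda>s. \<delta> s / t s) \<longlongrightarrow> 0) (at_right 0)"
  proof (rule Lim_transform_eventually[OF dlogP_t_asymp])
    show "eventually (\<lambda>s. dlogP s (t s) = \<delta> s / t s) (at_right 0)"
      using eventually_t_ne_0 by eventually_elim (simp add: \<delta>_def)
  qed
qed (use d_first_ge_2 d_last_ge_2 t_tendsto_0 eventually_t_pos P_1_asymp dlogP_1_asymp P_t_asymp in
    \<open>simp_all add: \<alpha>_def \<beta>_def \<gamma>_def\<close>)

lemma eventually_factors_ne_0:
  "eventually (\<lambda>s. s > 0 \<and> (\<forall>i\<in>{1..n-1}. factor s 1 i \<noteq> 0 \<and> factor s (t s) i \<noteq> 0)) (at_right 0)"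
  using eventually_at_right_less eventually_bval_pow_lt_1 eventually_t_over_bval_pow_lt_1
proof eventually_elim
  case (elim s)
  have "factor s 1 i \<noteq> 0 \<and> factor s (t s) i \<noteq> 0" if i: "i \<in> {1..n-1}" for i
  proof
    show "factor s 1 i \<noteq> 0" using elim(2) i unfolding factor_def by fastforce
    have b: "bval d n s i > 0" using bval_pos[OF elim(1)] i by simp
    have "(t s / bval d n s i) ^ D i < 1" using elim(3) i by blast
    then have "t s ^ D i < bval d n s i ^ D i" using b by (simp add: power_divide)
    then show "factor s (t s) i \<noteq> 0" unfolding factor_def by simp
  qed
  then show ?case using elim(1) by blast
qed

lemma Qn_conditions:
  assumes s: "s > 0" and nz: "\<forall>i\<in>{1..n-1}. factor s 1 i \<noteq> 0 \<and> factor s (t s) i \<noteq> 0"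
    and sol: "I.interpolates s X Y Z W"
  shows "Qn d n s X Y Z W 1 = 1 \<and> (Qn d n s X Y Z W has_real_derivative 1) (at 1)
    \<and> Qn d n s X Y Z W (t s) = t s \<and> (Qn d n s X Y Z W has_real_derivative 1) (at (t s))"
proof -
  have c: "I.c1 = real (d 1)" "I.cn = real (d n)" unfolding I.c1_def I.cn_def by (rule refl)+
  have "d n = Suc (d n - 1)" using d_last_ge_2 by simp
  then have t_pow: "t s ^ d n = t s ^ (d n - 1) * t s" by (metis power_Suc2)
  have t_ne: "t s \<noteq> 0" using s by (simp add: t_def)
  have N: "I.N1 s = real (d 1) * P s 1"
    "I.N1' s = real (d 1) * real (d n) * P s 1 + real (d 1) * (P s 1 * dlogP s 1)"
    "I.Nt s = real (d 1) * t s ^ d n * P s (t s)"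
    "I.Nt' s = real (d 1) * real (d n) * t s ^ (d n - 1) * P s (t s)
       + real (d 1) * t s ^ d n * (P s (t s) * dlogP s (t s))"
    unfolding I.N1_def I.N1'_def I.Nt_def I.Nt'_def c \<alpha>_def \<beta>_def \<gamma>_def \<delta>_def t_pow
    using d_last_ge_2 t_ne by (simp_all add: field_simps)
  have D: "I.Dpoly X Y Z z = (real (d 1) - 1) * X * z ^ d 1 + Y * z + Z"
    "I.Dpoly' X Y z = (real (d 1) - 1) * X * (real (d 1) * z ^ (d 1 - 1)) + Y" for z
    unfolding I.Dpoly_def I.Dpoly'_def c by simp_all
  have Q: "Qn d n s X Y Z W 1 = I.N1 s / I.Dpoly X Y Z 1 + W"
    "Qn d n s X Y Z W (t s) = I.Nt s / I.Dpoly X Y Z (t s) + W"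
    unfolding Qn_eq N D by simp_all
  have D_ne: "I.Dpoly X Y Z 1 \<noteq> 0" "I.Dpoly X Y Z (t s) \<noteq> 0"
    and eq: "I.N1 s / I.Dpoly X Y Z 1 + W = 1" "I.Nt s / I.Dpoly X Y Z (t s) + W = t s"
      "(I.N1' s * I.Dpoly X Y Z 1 - I.N1 s * I.Dpoly' X Y 1) / (I.Dpoly X Y Z 1)^2 = 1"
      "(I.Nt' s * I.Dpoly X Y Z (t s) - I.Nt s * I.Dpoly' X Y (t s)) / (I.Dpoly X Y Z (t s))^2 = 1"
    using sol unfolding I.interpolates_def by blast+
  have "(Qn d n s X Y Z W has_real_derivative
      (I.N1' s * I.Dpoly X Y Z 1 - I.N1 s * I.Dpoly' X Y 1) / (I.Dpoly X Y Z 1)^2) (at 1)"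
    using has_real_derivative_Qn[of s 1 X Y Z W] nz D_ne unfolding N D by simp
  moreover have "(Qn d n s X Y Z W has_real_derivative
      (I.Nt' s * I.Dpoly X Y Z (t s) - I.Nt s * I.Dpoly' X Y (t s)) / (I.Dpoly X Y Z (t s))^2) (at (t s))"
    using has_real_derivative_Qn[of s "t s" X Y Z W] nz D_ne unfolding N D by simp
  ultimately show ?thesis unfolding Q eq by blast
qed

end

theorem lemma3p2:
  fixes n :: nat and d :: "nat \<Rightarrow> nat"
  assumes "n \<ge> 3" and "odd n"
    and "\<forall>i\<in>{1..n}. d i > 0"
    and "(\<Sum>i=1..n. 1 / real (d i)) < 1"
  shows "\<exists>s0>0. \<exists>X Y Z W :: real \<Rightarrow> real.
    (\<forall>s. 0 < s \<and> s < s0 \<longrightarrow>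
        Qn d n s (X s) (Y s) (Z s) (W s) 1 = 1
      \<and> (Qn d n s (X s) (Y s) (Z s) (W s) has_real_derivative 1) (at 1)
      \<and> Qn d n s (X s) (Y s) (Z s) (W s) (s powr nu d n) = s powr nu d n
      \<and> (Qn d n s (X s) (Y s) (Z s) (W s) has_real_derivative 1) (at (s powr nu d n)))
    \<and> ((\<lambda>s. (X s - 1) / s powr nu d n) \<longlongrightarrow>
         real (d 1) * (real (d 1) - 3) * (real (d n) - 1) / ((real (d 1) - 1)^2 * real (d n))) (at_right 0)
    \<and> ((\<lambda>s. Y s / s powr nu d n) \<longlongrightarrow>
         2 * real (d 1) * (real (d n) - 1) / ((real (d 1) - 1) * real (d n))) (at_right 0)
    \<and> ((\<lambda>s. (Z s - 1) / s powr nu d n) \<longlongrightarrow> 0) (at_right 0)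
    \<and> ((\<lambda>s. W s / s powr nu d n) \<longlongrightarrow> (real (d n) - 1) / real (d n)) (at_right 0)"
proof -
  interpret Qn_data n d using assms by unfold_locales
  obtain X Y Z W where sol: "eventually (\<lambda>s. I.interpolates s (X s) (Y s) (Z s) (W s)) (at_right 0)"
    and limits: "((\<lambda>s. (X s - 1) / t s) \<longlongrightarrow> I.c1 * (I.c1 - 3) * (I.cn - 1) / ((I.c1 - 1)^2 * I.cn)) (at_right 0)"
      "((\<lambda>s. Y s / t s) \<longlongrightarrow> 2 * I.c1 * (I.cn - 1) / ((I.c1 - 1) * I.cn)) (at_right 0)"
      "((\<lambda>s. (Z s - 1) / t s) \<longlongrightarrow> 0) (at_right 0)"
      "((\<lambda>s. W s / t s) \<longlongrightarrow> (I.cn - 1) / I.cn) (at_right 0)"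
    using I.exists_interpolating_family by blast
  have "eventually (\<lambda>s. Qn d n s (X s) (Y s) (Z s) (W s) 1 = 1
      \<and> (Qn d n s (X s) (Y s) (Z s) (W s) has_real_derivative 1) (at 1)
      \<and> Qn d n s (X s) (Y s) (Z s) (W s) (t s) = t s
      \<and> (Qn d n s (X s) (Y s) (Z s) (W s) has_real_derivative 1) (at (t s))) (at_right 0)"
    using sol eventually_factors_ne_0 by eventually_elim (simp add: Qn_conditions)
  then show ?thesis
    using limits unfolding eventually_at_right_field t_def I.c1_def I.cn_def by blast
qed

end
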